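(* There exists a coefficient vector $\mathbf a=(a_0,a_1,a_2,\dots)\in\mathbb{R}^{\mathbb{N}}$ such that for every graph $G$, if $G$ is geometrically rigid then the linear centrality $f^{\mathbf a}$ has no ties on $G$.
   Context: A graph $G$ is a finite directed graph with node set $V_G=\{0,\dots,n-1\}$ and arc set $E_G\subseteq V_G\times V_G$; $d_G(x,y)$ is the shortest directed path length from $x$ to $y$ ($\infty$ if none). The distance-count matrix $C_G\in\mathbb{R}^{n\times n}$ has entries $(C_G)_{i,k}=|\{j\in V_G: d_G(j,i)=k\}|$ for $i,k\in\{0,\dots,n-1\}$. $G$ is geometrically rigid if the rows of $C_G$ are pairwise distinct. For $\mathbf a\in\mathbb{R}^{\mathbb{N}}$, the linear centrality $f^{\mathbf a}$ is defined by $f^{\mathbf a}_G(i)=\sum_{k=0}^{n-1}(C_G)_{i,k}\,a_k$. A centrality $f$ has no ties on $G$ if $f_G(x)\ne f_G(y)$ for all distinct $x,y\in V_G$. *)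

theory Defs
  imports Main "HOL-Library.Extended_Nat"
begin

definition is_graph :: "nat \<Rightarrow> (nat \<times> nat) set \<Rightarrow> bool" where
  "is_graph n E \<longleftrightarrow> E \<subseteq> {0..<n} \<times> {0..<n}"

text \<open>Shortest directed path length from x to y (infinity if none):
  the least k such that there is a walk of exactly k arcs (shortest walks are paths).\<close>

definition gdist :: "(nat \<times> nat) set \<Rightarrow> nat \<Rightarrow> nat \<Rightarrow> enat" where
  "gdist E x y = (if \<exists>k. (x, y) \<in> E ^^ k then enat (LEAST k. (x, y) \<in> E ^^ k) else \<infinity>)"

definition dcount :: "nat \<Rightarrow> (nat \<times> nat) set \<Rightarrow> nat \<Rightarrow> nat \<Rightarrow> nat" where
  "dcount n E i k = card {j \<in> {0..<n}. gdist E j i = enat k}"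

definition crow :: "nat \<Rightarrow> (nat \<times> nat) set \<Rightarrow> nat \<Rightarrow> nat \<Rightarrow> nat" where
  "crow n E i = (\<lambda>k. if k < n then dcount n E i k else 0)"

definition geom_rigid :: "nat \<Rightarrow> (nat \<times> nat) set \<Rightarrow> bool" where
  "geom_rigid n E \<longleftrightarrow> (\<forall>x\<in>{0..<n}. \<forall>y\<in>{0..<n}. x \<noteq> y \<longrightarrow> crow n E x \<noteq> crow n E y)"

definition lin_centrality :: "(nat \<Rightarrow> real) \<Rightarrow> nat \<Rightarrow> (nat \<times> nat) set \<Rightarrow> nat \<Rightarrow> real" where
  "lin_centrality a n E i = (\<Sum>k<n. real (dcount n E i k) * a k)"

definition no_ties :: "(nat \<Rightarrow> (nat \<times> nat) set \<Rightarrow> nat \<Rightarrow> real) \<Rightarrow> nat \<Rightarrow> (nat \<times> nat) set \<Rightarrow> bool" where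
  "no_ties f n E \<longleftrightarrow> (\<forall>x\<in>{0..<n}. \<forall>y\<in>{0..<n}. x \<noteq> y \<longrightarrow> f n E x \<noteq> f n E y)"

end

theory Submission
  imports Defs "HOL-Computational_Algebra.Polynomial" "HOL-Analysis.Continuum_Not_Denumerable"
begin

text \<open>Take \<open>a\<^sub>k = t\<^sup>k\<close> for a transcendental real \<open>t\<close>, which exists because the algebraic
  numbers are countable. The difference of the centralities of two nodes is then the value at
  \<open>t\<close> of the integer polynomial whose coefficients are the differences of the two rows of the
  distance-count matrix, so it vanishes only if the two rows coincide.\<close>

lemma countable_algebraic: "countable {x :: 'a :: field_char_0. algebraic x}"
proof -
  let ?P = "\<lambda>cs :: int list. Poly (map of_int cs) :: 'a poly"
  have "{x. algebraic x} \<subseteq> (\<Union>cs \<in> {cs. ?P cs \<noteq> 0}. {x. poly (?P cs) x = 0})"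
  proof
    fix x :: 'a
    assume "x \<in> {x. algebraic x}"
    then obtain p where p_int: "\<And>i. coeff p i \<in> \<int>" and "p \<noteq> 0" "poly p x = 0"
      using algebraicE by blast
    define cs where "cs = map (\<lambda>c. SOME m. c = of_int m) (coeffs p)"
    have "c = of_int (SOME m. c = of_int m)" if "c \<in> set (coeffs p)" for c
    proof -
      have "c \<in> range (coeff p)" using that range_coeff[of p] by blast
      then have "c \<in> \<int>" using p_int by blast
      then obtain m where "c = of_int m" by (rule Ints_cases)
      then show ?thesis by (rule someI[where P = "\<lambda>m. c = of_int m"])
    qed
    then have "map of_int cs = coeffs p"
      unfolding cs_def by (simp add: map_idI)
    then have "?P cs = p" by simp
    with \<open>p \<noteq> 0\<close> \<open>poly p x = 0\<close> show "x \<in> (\<Union>cs \<in> {cs. ?P cs \<noteq> 0}. {x. poly (?P cs) x = 0})"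
      by blast
  qed
  moreover have "countable (\<Union>cs \<in> {cs. ?P cs \<noteq> 0}. {x. poly (?P cs) x = 0})"
  proof (rule countable_UN)
    show "countable {cs. ?P cs \<noteq> 0}"
      by (rule countableI'[OF inj_on_id])
    show "countable {x. poly (?P cs) x = 0}" if "cs \<in> {cs. ?P cs \<noteq> 0}" for cs
      using that by (simp add: countable_finite poly_roots_finite)
  qed
  ultimately show ?thesis by (rule countable_subset)
qed

lemma transcendental_real_exists: "\<exists>t :: real. \<not> algebraic t"
proof (rule ccontr)
  assume "\<nexists>t :: real. \<not> algebraic t"
  then have "{t :: real. algebraic t} = UNIV" by blast
  with countable_algebraic have "countable (UNIV :: real set)" by metis
  with uncountable_UNIV_real show False by contradiction
qed

lemma transcendental_power_sum_eq_0:
  fixes t :: "'a :: field_char_0"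
  assumes "\<not> algebraic t" and "(\<Sum>i<n. of_int (c i) * t ^ i) = 0" and "k < n"
  shows "c k = 0"
proof -
  define p :: "'a poly" where "p = (\<Sum>i<n. monom (of_int (c i)) i)"
  have coeff_p: "coeff p i = (if i < n then of_int (c i) else 0)" for i
    unfolding p_def by (simp add: coeff_sum)
  have "poly p t = 0"
    using assms(2) unfolding p_def by (simp add: poly_sum poly_monom)
  moreover have "coeff p i \<in> \<int>" for i
    by (simp add: coeff_p)
  ultimately have "p = 0"
    using \<open>\<not> algebraic t\<close> algebraicI by blast
  then show "c k = 0"
    using coeff_p[of k] \<open>k < n\<close> by simp
qed

lemma transcendental_power_sum_eq:
  fixes t :: "'a :: field_char_0"
  assumes "\<not> algebraic t" and "(\<Sum>i<n. of_nat (c i) * t ^ i) = (\<Sum>i<n. of_nat (d i) * t ^ i)"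
    and "k < n"
  shows "c k = d k"
proof -
  have "(\<Sum>i<n. of_int (int (c i) - int (d i)) * t ^ i) = 0"
    using assms(2) by (simp add: algebra_simps sum_subtractf)
  from transcendental_power_sum_eq_0[OF assms(1) this assms(3)] show ?thesis by simp
qed

lemma crow_eq_if_lin_centrality_powers_eq:
  assumes "\<not> algebraic t"
    and "lin_centrality (\<lambda>k. t ^ k) n E x = lin_centrality (\<lambda>k. t ^ k) n E y"
  shows "crow n E x = crow n E y"
proof
  fix k
  show "crow n E x k = crow n E y k"
    using transcendental_power_sum_eq[OF assms(1) assms(2)[unfolded lin_centrality_def], of k]
    unfolding crow_def by simp
qed

theorem theorem3:
  shows "\<exists>a :: nat \<Rightarrow> real. \<forall>n E. is_graph n E \<longrightarrow> geom_rigid n E \<longrightarrow>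
           no_ties (lin_centrality a) n E"
proof -
  obtain t :: real where t: "\<not> algebraic t"
    using transcendental_real_exists by blast
  have "no_ties (lin_centrality (\<lambda>k. t ^ k)) n E" if "geom_rigid n E" for n E
    using that crow_eq_if_lin_centrality_powers_eq[OF t]
    unfolding no_ties_def geom_rigid_def by blast
  then show ?thesis by blast
qed

end
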